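(* Let $\varepsilon\in(0,1/2)$ and $\Delta\ge1$. Let $H=(V,E_H)$ be a multigraph with spanning forest $F_H$ (a maximal acyclic subset of $E_H$), let $e=(a,b)\notin E_H$ be an edge whose endpoints lie in the same tree of $F_H$, and suppose the endpoints of the edges of $(E_H\cup\{e\})\setminus F_H$ are distinct vertices any two of which are at distance at least $\Delta$ in $F_H$. Let $X\in\{0,1\}^V$ be uniform, $Z\in\{0,1\}^{E_H\cup\{e\}}$ have independent Bernoulli$(\varepsilon)$ entries independent of $X$, and $Y(f)=X(u)+X(v)+Z(f)\pmod 2$ for $f=(u,v)$. Let $r=|E_H\setminus F_H|$ and $\rho=(1-2\varepsilon)^\Delta$, and suppose $(1+\rho)^r<2$. Then for every $y\in\{0,1\}^{E_H}$ with $\Pr[Y|_{E_H}=y]>0$, $$\left|\Pr[Y(e)=0\mid Y|_{E_H}=y]-\tfrac12\right|\le\frac{(1-2\varepsilon)^{\Delta-1}(1+\rho)^{r}}{2-(1+\rho)^{r}}.$$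
   Context: Distances in $F_H$ are shortest-path distances in the forest $F_H$. *)

theory Defs
  imports Complex_Main "HOL-Library.Extended_Nat" "HOL-Library.FuncSet"
begin

text \<open>A multigraph is given by a vertex set V, an edge index set E, and an endpoint
  map ep assigning to each edge index its (unordered) pair of endpoints.\<close>

definition connects :: "('e \<Rightarrow> 'v \<times> 'v) \<Rightarrow> 'e \<Rightarrow> 'v \<Rightarrow> 'v \<Rightarrow> bool" where
  "connects ep f u v \<longleftrightarrow> ep f = (u, v) \<or> ep f = (v, u)"

definition ends :: "('e \<Rightarrow> 'v \<times> 'v) \<Rightarrow> 'e \<Rightarrow> 'v set" where
  "ends ep f = {fst (ep f), snd (ep f)}"

text \<open>Loops (length 1) and pairs of parallel edges (length 2) are cycles.\<close>
definition is_cycle :: "('e \<Rightarrow> 'v \<times> 'v) \<Rightarrow> 'e set \<Rightarrow> 'e list \<Rightarrow> 'v list \<Rightarrow> bool" where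
  "is_cycle ep F es vs \<longleftrightarrow> es \<noteq> [] \<and> length vs = Suc (length es) \<and> distinct es \<and>
     set es \<subseteq> F \<and> hd vs = last vs \<and> distinct (butlast vs) \<and>
     (\<forall>i < length es. connects ep (es ! i) (vs ! i) (vs ! Suc i))"

definition acyclic_edges :: "('e \<Rightarrow> 'v \<times> 'v) \<Rightarrow> 'e set \<Rightarrow> bool" where
  "acyclic_edges ep F \<longleftrightarrow> \<not> (\<exists>es vs. is_cycle ep F es vs)"

definition spanning_forest :: "('e \<Rightarrow> 'v \<times> 'v) \<Rightarrow> 'e set \<Rightarrow> 'e set \<Rightarrow> bool" where
  "spanning_forest ep E F \<longleftrightarrow> F \<subseteq> E \<and> acyclic_edges ep F \<and>
     (\<forall>f \<in> E - F. \<not> acyclic_edges ep (insert f F))"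

text \<open>Walks in F (as vertex sequences) and shortest-path distance in F
  (infinity if u and v are in different components).\<close>
definition walk_in :: "('e \<Rightarrow> 'v \<times> 'v) \<Rightarrow> 'e set \<Rightarrow> 'v list \<Rightarrow> bool" where
  "walk_in ep F vs \<longleftrightarrow> vs \<noteq> [] \<and>
     (\<forall>i. Suc i < length vs \<longrightarrow> (\<exists>f \<in> F. connects ep f (vs ! i) (vs ! Suc i)))"

definition fdist :: "('e \<Rightarrow> 'v \<times> 'v) \<Rightarrow> 'e set \<Rightarrow> 'v \<Rightarrow> 'v \<Rightarrow> enat" where
  "fdist ep F u v = (INF vs \<in> {vs. walk_in ep F vs \<and> hd vs = u \<and> last vs = v}.
                        enat (length vs - 1))"

text \<open>The probability space: X uniform on {0,1}^V, Z i.i.d. Bernoulli(eps) on the edge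
  set EE (bits encoded as bool, 0 = False), independent.  Finite sample space.\<close>
definition sample_space :: "'v set \<Rightarrow> 'e set \<Rightarrow> (('v \<Rightarrow> bool) \<times> ('e \<Rightarrow> bool)) set" where
  "sample_space V EE = (V \<rightarrow>\<^sub>E (UNIV :: bool set)) \<times> (EE \<rightarrow>\<^sub>E (UNIV :: bool set))"

definition weight :: "real \<Rightarrow> 'v set \<Rightarrow> 'e set \<Rightarrow> ('v \<Rightarrow> bool) \<times> ('e \<Rightarrow> bool) \<Rightarrow> real" where
  "weight eps V EE \<omega> = (1/2) ^ card V *
     (\<Prod>f \<in> EE. if snd \<omega> f then eps else 1 - eps)"

definition Pr :: "real \<Rightarrow> 'v set \<Rightarrow> 'e set \<Rightarrow>
    (('v \<Rightarrow> bool) \<times> ('e \<Rightarrow> bool) \<Rightarrow> bool) \<Rightarrow> real" where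
  "Pr eps V EE A = (\<Sum>\<omega> \<in> {\<omega> \<in> sample_space V EE. A \<omega>}. weight eps V EE \<omega>)"

definition cond_Pr :: "real \<Rightarrow> 'v set \<Rightarrow> 'e set \<Rightarrow>
    (('v \<Rightarrow> bool) \<times> ('e \<Rightarrow> bool) \<Rightarrow> bool) \<Rightarrow>
    (('v \<Rightarrow> bool) \<times> ('e \<Rightarrow> bool) \<Rightarrow> bool) \<Rightarrow> real" where
  "cond_Pr eps V EE A B = Pr eps V EE (\<lambda>\<omega>. A \<omega> \<and> B \<omega>) / Pr eps V EE B"

definition Yv :: "('e \<Rightarrow> 'v \<times> 'v) \<Rightarrow> ('v \<Rightarrow> bool) \<times> ('e \<Rightarrow> bool) \<Rightarrow> 'e \<Rightarrow> bool" where
  "Yv ep \<omega> f = ((fst \<omega> (fst (ep f)) \<noteq> fst \<omega> (snd (ep f))) \<noteq> snd \<omega> f)"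

end

theory Submission
  imports Defs
begin

text \<open>Write \<theta> = 1 - 2\<epsilon> and \<rho> = \<theta>^\<Delta>.  Expanding the law of Y over the characters of X, the
  probability that Y agrees with s on G is 2^-|G| times the sum of \<theta>^|S| \<Prod>f \<in> S. (-1)^s(f)
  over the edge sets S \<subseteq> G in which every vertex has even degree.  Hence the conditional
  probability of Y(e) = 0 is 1/2 + N/(2K), where K is this sum for G = E_H and N collects
  the even sets containing e.  An even set S is determined by S - F, because the difference
  of two such sets is an even subgraph of the forest.  The odd-degree vertices of S \<inter> F are
  the endpoints of the edges of S - F, which are pairwise \<Delta> apart in F, so
  \<Delta> |S - F| \<le> |S \<inter> F| and \<theta>^|S| \<le> \<rho>^|S - F|.  Summing over the possible sets S - F gives
  K \<ge> 2 - (1 + \<rho>)^r and |N| \<le> \<rho> (1 + \<rho>)^r.\<close>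

section \<open>Degrees and walks\<close>

definition edge_degree :: "('e \<Rightarrow> 'v \<times> 'v) \<Rightarrow> 'e set \<Rightarrow> 'v \<Rightarrow> nat" where
  "edge_degree ep R w = card {f\<in>R. fst (ep f) = w} + card {f\<in>R. snd (ep f) = w}"

lemma edge_degree_Un:
  assumes "finite A" "finite B" "A \<inter> B = {}"
  shows "edge_degree ep (A \<union> B) w = edge_degree ep A w + edge_degree ep B w"
proof -
  have "{f\<in>A\<union>B. fst (ep f) = w} = {f\<in>A. fst (ep f) = w} \<union> {f\<in>B. fst (ep f) = w}"
       "{f\<in>A\<union>B. snd (ep f) = w} = {f\<in>A. snd (ep f) = w} \<union> {f\<in>B. snd (ep f) = w}" by auto
  then show ?thesis unfolding edge_degree_def
    by (simp only:) (subst card_Un_disjoint, use assms in auto)+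
qed

lemma edge_degree_singleton:
  "edge_degree ep {g} w = (if fst (ep g) = w then 1 else 0) + (if snd (ep g) = w then 1 else 0)"
  unfolding edge_degree_def by (simp add: Collect_conv_if)

lemma edge_degree_eq_0:
  assumes "\<forall>f\<in>R. fst (ep f) \<noteq> w \<and> snd (ep f) \<noteq> w"
  shows "edge_degree ep R w = 0"
  using assms unfolding edge_degree_def by (auto simp: card_eq_0_iff)

lemma odd_edge_degree_Diff_edge:
  assumes "finite R" "g \<in> R" "connects ep g u v" "u \<noteq> v"
  shows "odd (edge_degree ep (R - {g}) x) \<longleftrightarrow> odd (edge_degree ep R x) \<noteq> (x = u \<or> x = v)"
proof -
  have "edge_degree ep R x = edge_degree ep ((R - {g}) \<union> {g}) x"
    using assms(2) by (simp add: insert_absorb)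
  also have "\<dots> = edge_degree ep (R - {g}) x + edge_degree ep {g} x"
    using assms(1) by (intro edge_degree_Un) auto
  finally have d: "edge_degree ep R x = edge_degree ep (R - {g}) x + edge_degree ep {g} x" .
  from assms(3) consider "ep g = (u, v)" | "ep g = (v, u)" unfolding connects_def by blast
  then show ?thesis
    by cases (use d assms(4) in \<open>(cases "x = u"; cases "x = v"; simp add: edge_degree_singleton)+\<close>)
qed

lemma finite_odd_edge_degree:
  assumes "finite R"
  shows "finite {w. odd (edge_degree ep R w)}"
proof (rule finite_subset)
  show "{w. odd (edge_degree ep R w)} \<subseteq> (\<lambda>f. fst (ep f)) ` R \<union> (\<lambda>f. snd (ep f)) ` R"
  proof
    fix w assume "w \<in> {w. odd (edge_degree ep R w)}"
    then have "edge_degree ep R w \<noteq> 0" by (intro notI) simp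
    then show "w \<in> (\<lambda>f. fst (ep f)) ` R \<union> (\<lambda>f. snd (ep f)) ` R"
      using edge_degree_eq_0[of R ep w] by force
  qed
qed (use assms in simp)

lemma odd_edge_degree_nonloop:
  assumes "odd (edge_degree ep R u)"
  shows "\<exists>g\<in>R. \<exists>v. v \<noteq> u \<and> connects ep g u v"
proof (rule ccontr)
  assume "\<not> ?thesis"
  then have "\<And>g. g \<in> R \<Longrightarrow> fst (ep g) = u \<or> snd (ep g) = u \<Longrightarrow> ep g = (u, u)"
    unfolding connects_def by (metis prod.collapse)
  then have "{f\<in>R. fst (ep f) = u} = {f\<in>R. snd (ep f) = u}" by (metis fst_conv snd_conv)
  then show False using assms unfolding edge_degree_def by simp
qed

fun is_walk :: "('e \<Rightarrow> 'v \<times> 'v) \<Rightarrow> 'e set \<Rightarrow> 'v list \<Rightarrow> bool" where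
  "is_walk ep R [] = False"
| "is_walk ep R [v] = True"
| "is_walk ep R (v # w # vs) \<longleftrightarrow> (\<exists>f\<in>R. connects ep f v w) \<and> is_walk ep R (w # vs)"

lemma is_walk_mono: "is_walk ep R vs \<Longrightarrow> R \<subseteq> R' \<Longrightarrow> is_walk ep R' vs"
  by (induction ep R vs rule: is_walk.induct) auto

lemma walk_in_if_is_walk: "is_walk ep R vs \<Longrightarrow> walk_in ep R vs"
proof (induction ep R vs rule: is_walk.induct)
  case (3 ep R v w vs)
  then have "walk_in ep R (w # vs)" by simp
  with 3 show ?case unfolding walk_in_def by (auto simp: nth_Cons split: nat.split)
qed (auto simp: walk_in_def)

lemma fdist_le_walk_length:
  assumes "is_walk ep R vs" "R \<subseteq> F"
  shows "fdist ep F (hd vs) (last vs) \<le> enat (length vs - 1)"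
  unfolding fdist_def by (rule INF_lower) (use assms walk_in_if_is_walk is_walk_mono in blast)

lemma is_walk_append_right: "is_walk ep R (p @ q) \<Longrightarrow> q \<noteq> [] \<Longrightarrow> is_walk ep R q"
proof (induction p)
  case (Cons a p) then show ?case by (cases "p @ q") auto
qed simp

lemma is_walk_shortcut:
  "is_walk ep R vs \<Longrightarrow> \<exists>ps. is_walk ep R ps \<and> hd ps = hd vs \<and> last ps = last vs \<and> distinct ps"
proof (induction ep R vs rule: is_walk.induct)
  case (2 ep R v) then show ?case by (intro exI[of _ "[v]"]) simp
next
  case (3 ep R v w vs)
  then obtain ps where ps: "is_walk ep R ps" "hd ps = w" "last ps = last (w # vs)" "distinct ps"
    by auto
  show ?case
  proof (cases "v \<in> set ps")
    case True
    then obtain p q where "ps = p @ v # q" by (meson split_list)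
    with ps is_walk_append_right[of ep R p "v # q"] show ?thesis
      by (intro exI[of _ "v # q"]) auto
  next
    case False
    with 3 ps show ?thesis by (intro exI[of _ "v # ps"]) (cases ps; auto)
  qed
qed simp

lemma is_walk_distinct_edges:
  "is_walk ep R ps \<Longrightarrow> distinct ps \<Longrightarrow> \<exists>es. length ps = Suc (length es) \<and> distinct es \<and>
     set es \<subseteq> R \<and> (\<forall>i<length es. connects ep (es ! i) (ps ! i) (ps ! Suc i))"
proof (induction ep R ps rule: is_walk.induct)
  case (2 ep R v) then show ?case by (intro exI[of _ "[]"]) simp
next
  case (3 ep R v w vs)
  then obtain es where es: "length (w # vs) = Suc (length es)" "distinct es" "set es \<subseteq> R"
     "\<forall>i<length es. connects ep (es ! i) ((w # vs) ! i) ((w # vs) ! Suc i)" by auto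
  from 3 obtain f where f: "f \<in> R" "connects ep f v w" by auto
  have "f \<notin> set es"
  proof
    assume "f \<in> set es"
    then obtain i where i: "i < length es" "es ! i = f" by (meson in_set_conv_nth)
    then have "connects ep f ((w # vs) ! i) ((w # vs) ! Suc i)" using es(4) by auto
    moreover have "(w # vs) ! i \<in> set (w # vs)" "(w # vs) ! Suc i \<in> set (w # vs)"
      using i es(1) by (intro nth_mem; simp)+
    ultimately show False using f(2) \<open>distinct (v # w # vs)\<close> unfolding connects_def by auto
  qed
  with es f show ?case
    by (intro exI[of _ "f # es"]) (auto simp: nth_Cons split: nat.split)
qed simp_all

section \<open>Trails between odd-degree vertices\<close>

lemma odd_edge_degree_trail:
  assumes "finite R" "odd (edge_degree ep R u)"
  shows "\<exists>w vs R'. w \<noteq> u \<and> odd (edge_degree ep R w) \<and> is_walk ep R vs \<and> hd vs = u \<and>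
     last vs = w \<and> R' \<subseteq> R \<and> card R' + 1 = length vs \<and>
     (\<forall>x. odd (edge_degree ep (R - R') x) \<longleftrightarrow> odd (edge_degree ep R x) \<noteq> (x = u \<or> x = w))"
  using assms
proof (induction "card R" arbitrary: R u rule: less_induct)
  case less
  obtain g v where g: "g \<in> R" "v \<noteq> u" "connects ep g u v"
    using odd_edge_degree_nonloop[OF less(3)] by blast
  have flip: "odd (edge_degree ep (R - {g}) x) \<longleftrightarrow> odd (edge_degree ep R x) \<noteq> (x = u \<or> x = v)"
    for x using odd_edge_degree_Diff_edge[OF less(2) g(1,3)] g(2) by blast
  show ?case
  proof (cases "odd (edge_degree ep R v)")
    case True
    with g flip show ?thesis by (intro exI[of _ v] exI[of _ "[u, v]"] exI[of _ "{g}"]) auto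
  next
    case False
    then have "odd (edge_degree ep (R - {g}) v)" using flip[of v] by simp
    moreover have "card (R - {g}) < card R" using card_Diff1_less[OF less(2) g(1)] .
    ultimately obtain w vs R1 where IH: "w \<noteq> v" "odd (edge_degree ep (R - {g}) w)"
      "is_walk ep (R - {g}) vs" "hd vs = v" "last vs = w" "R1 \<subseteq> R - {g}" "card R1 + 1 = length vs"
      "\<forall>x. odd (edge_degree ep (R - {g} - R1) x) \<longleftrightarrow> odd (edge_degree ep (R - {g}) x) \<noteq> (x = v \<or> x = w)"
      using less(1) less(2) by (metis finite_Diff)
    have "w \<noteq> u" using IH(1,2) flip[of w] less(3) by auto
    moreover have "odd (edge_degree ep R w)" using IH(1,2) flip[of w] \<open>w \<noteq> u\<close> by auto
    moreover have "is_walk ep R (u # vs)"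
      using is_walk_mono[OF IH(3)] g IH(4) by (cases vs) auto
    moreover have "card (insert g R1) = card R1 + 1"
      using IH(6) less(2) by (subst card_insert_disjoint) (auto intro: finite_subset)
    moreover have "R - insert g R1 = R - {g} - R1" by auto
    ultimately show ?thesis
      using IH g flip by (intro exI[of _ w] exI[of _ "u # vs"] exI[of _ "insert g R1"]) (auto simp: hd_conv_nth)
  qed
qed

text \<open>Repeatedly peel off a trail in \<open>R\<close> joining two odd-degree vertices: it has length at
  least \<open>\<Delta>\<close> and removes exactly two odd vertices.\<close>
lemma card_odd_edge_degree_le:
  assumes "finite R" "R \<subseteq> F"
    and "\<forall>u w. odd (edge_degree ep R u) \<longrightarrow> odd (edge_degree ep R w) \<longrightarrow> u \<noteq> w \<longrightarrow>
               enat \<Delta> \<le> fdist ep F u w"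
  shows "\<Delta> * card {w. odd (edge_degree ep R w)} \<le> 2 * card R"
  using assms
proof (induction "card R" arbitrary: R rule: less_induct)
  case less
  show ?case
  proof (cases "\<exists>u. odd (edge_degree ep R u)")
    case False then show ?thesis by simp
  next
    case True
    then obtain u where u: "odd (edge_degree ep R u)" by blast
    obtain w vs R' where T: "w \<noteq> u" "odd (edge_degree ep R w)" "is_walk ep R vs" "hd vs = u"
      "last vs = w" "R' \<subseteq> R" "card R' + 1 = length vs"
      "\<forall>x. odd (edge_degree ep (R - R') x) \<longleftrightarrow> odd (edge_degree ep R x) \<noteq> (x = u \<or> x = w)"
      using odd_edge_degree_trail[OF less(2) u] by blast
    have "enat \<Delta> \<le> fdist ep F u w" using less(4) u T(1,2) by auto
    also have "\<dots> \<le> enat (card R')" using fdist_le_walk_length[OF T(3) less(3)] unfolding T(4,5) T(7)[symmetric] by simp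
    finally have long: "\<Delta> \<le> card R'" by simp
    have odd_eq: "{x. odd (edge_degree ep (R - R') x)} = {x. odd (edge_degree ep R x)} - {u, w}"
      using T(8) u T(2) by blast
    have sub: "{u, w} \<subseteq> {x. odd (edge_degree ep R x)}" using u T(2) by blast
    then have "card {u, w} \<le> card {x. odd (edge_degree ep R x)}"
      using finite_odd_edge_degree[OF less(2)] by (rule card_mono[rotated])
    then have card_odd: "card {x. odd (edge_degree ep R x)} = card {x. odd (edge_degree ep (R - R') x)} + 2"
      unfolding odd_eq using sub T(1) by (simp add: card_Diff_subset)
    have "card R' \<noteq> 0"
    proof
      assume "card R' = 0"
      then obtain x where "vs = [x]" using T(7) by (cases vs) auto
      then show False using T(1,4,5) by simp
    qed
    moreover have "finite R'" using T(6) less(2) finite_subset by blast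
    ultimately have card_R: "card R = card (R - R') + card R'"
      using T(6) less(2) by (simp add: card_Diff_subset card_mono)
    have "\<Delta> * card {x. odd (edge_degree ep (R - R') x)} \<le> 2 * card (R - R')"
    proof (rule less(1))
      show "card (R - R') < card R" using card_R \<open>card R' \<noteq> 0\<close> by linarith
      show "\<forall>u w. odd (edge_degree ep (R - R') u) \<longrightarrow> odd (edge_degree ep (R - R') w) \<longrightarrow> u \<noteq> w \<longrightarrow>
               enat \<Delta> \<le> fdist ep F u w" using odd_eq less(4) by blast
    qed (use less(2,3) in auto)
    then show ?thesis
      unfolding card_odd card_R using long by (simp add: algebra_simps)
  qed
qed

lemma acyclic_even_edge_degree_empty:
  assumes "acyclic_edges ep F" "finite W" "W \<subseteq> F" "\<forall>x. even (edge_degree ep W x)"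
  shows "W = {}"
proof (rule ccontr)
  assume "W \<noteq> {}"
  then obtain g where g: "g \<in> W" by auto
  have "\<exists>es vs. is_cycle ep F es vs"
  proof (cases "fst (ep g) = snd (ep g)")
    case True
    then have "is_cycle ep F [g] [fst (ep g), fst (ep g)]"
      using g assms(3) unfolding is_cycle_def connects_def by (auto simp: prod_eq_iff)
    then show ?thesis by blast
  next
    case False
    define u where "u = fst (ep g)"
    define v where "v = snd (ep g)"
    have c: "connects ep g u v" unfolding connects_def u_def v_def by simp
    have odd_iff: "odd (edge_degree ep (W - {g}) x) \<longleftrightarrow> x = u \<or> x = v" for x
      using odd_edge_degree_Diff_edge[OF assms(2) g c] False assms(4) unfolding u_def v_def by simp
    obtain w vs where "w \<noteq> v" "odd (edge_degree ep (W - {g}) w)"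
      and walk: "is_walk ep (W - {g}) vs" "hd vs = v" "last vs = w"
      using odd_edge_degree_trail[OF _ odd_iff[THEN iffD2]] assms(2) by blast
    then have "last vs = u" using odd_iff by blast
    with walk obtain ps where ps: "is_walk ep (W - {g}) ps" "hd ps = v" "last ps = u" "distinct ps"
      using is_walk_shortcut by metis
    obtain es where es: "length ps = Suc (length es)" "distinct es" "set es \<subseteq> W - {g}"
       "\<forall>i<length es. connects ep (es ! i) (ps ! i) (ps ! Suc i)"
      using is_walk_distinct_edges[OF ps(1,4)] by blast
    have ne: "ps \<noteq> []" using es(1) by auto
    then have "ps = butlast ps @ [u]" using ps(3) by (metis append_butlast_last_id)
    then have "u \<notin> set (butlast ps)" "distinct (butlast ps)" using ps(4)
      by (metis distinct_append not_distinct_conv_prefix)+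
    have "is_cycle ep F (g # es) (u # ps)"
      unfolding is_cycle_def
    proof (intro conjI allI impI)
      fix i assume "i < length (g # es)"
      then show "connects ep ((g # es) ! i) ((u # ps) ! i) ((u # ps) ! Suc i)"
        using c ps(2) ne es(4) by (cases i) (auto simp: hd_conv_nth)
    qed (use es g assms(3) ne ps \<open>u \<notin> set (butlast ps)\<close> \<open>distinct (butlast ps)\<close> in \<open>auto simp: last_conv_nth\<close>)
    then show ?thesis by blast
  qed
  then show False using assms(1) unfolding acyclic_edges_def by blast
qed

lemma even_edge_degree_sym_diff:
  assumes "finite S1" "finite S2" "\<forall>w. even (edge_degree ep S1 w)" "\<forall>w. even (edge_degree ep S2 w)"
  shows "even (edge_degree ep ((S1 - S2) \<union> (S2 - S1)) w)"
proof -
  have "(S1 \<inter> S2) \<union> (S1 - S2) = S1" "(S1 \<inter> S2) \<union> (S2 - S1) = S2" by auto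
  then have "edge_degree ep S1 w = edge_degree ep (S1 \<inter> S2) w + edge_degree ep (S1 - S2) w"
    "edge_degree ep S2 w = edge_degree ep (S1 \<inter> S2) w + edge_degree ep (S2 - S1) w"
    using edge_degree_Un[of "S1 \<inter> S2" "S1 - S2" ep w] edge_degree_Un[of "S1 \<inter> S2" "S2 - S1" ep w]
      assms(1,2) by auto
  moreover have "edge_degree ep ((S1 - S2) \<union> (S2 - S1)) w = edge_degree ep (S1 - S2) w + edge_degree ep (S2 - S1) w"
    using assms(1,2) by (intro edge_degree_Un) auto
  ultimately show ?thesis using assms(3,4) by (metis even_add)
qed

section \<open>Even subgraphs\<close>

definition even_subgraphs :: "('e \<Rightarrow> 'v \<times> 'v) \<Rightarrow> 'v set \<Rightarrow> 'e set \<Rightarrow> 'e set set" where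
  "even_subgraphs ep V G = {S. S \<subseteq> G \<and> (\<forall>w\<in>V. even (edge_degree ep S w))}"

lemma even_subgraphs_mono: "G \<subseteq> G' \<Longrightarrow> even_subgraphs ep V G \<subseteq> even_subgraphs ep V G'"
  unfolding even_subgraphs_def by auto

lemma empty_in_even_subgraphs: "{} \<in> even_subgraphs ep V G"
  unfolding even_subgraphs_def edge_degree_def by simp

definition spin :: "bool \<Rightarrow> real" where
  "spin c = (if c then -1 else 1)"

definition even_subgraph_sum :: "real \<Rightarrow> ('e \<Rightarrow> 'v \<times> 'v) \<Rightarrow> 'v set \<Rightarrow> 'e set \<Rightarrow> ('e \<Rightarrow> bool) \<Rightarrow> real" where
  "even_subgraph_sum \<theta> ep V G s = (\<Sum>S\<in>even_subgraphs ep V G. \<theta> ^ card S * (\<Prod>f\<in>S. spin (s f)))"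

lemma sum_power_card_Pow:
  assumes "finite B"
  shows "(\<Sum>T\<in>Pow B. (\<rho>::real) ^ card T) = (1 + \<rho>) ^ card B"
  using prod_add[OF assms, of "\<lambda>_. \<rho>" "\<lambda>_. 1"] by (simp add: add.commute)

lemma sum_power_card_Pow_containing:
  assumes "finite B" "e \<notin> B"
  shows "(\<Sum>T\<in>{T\<in>Pow (insert e B). e \<in> T}. (\<rho>::real) ^ card T) = \<rho> * (1 + \<rho>) ^ card B"
proof -
  have "{T\<in>Pow (insert e B). e \<in> T} = Pow (insert e B) - Pow B" using assms(2) by auto
  then have "(\<Sum>T\<in>{T\<in>Pow (insert e B). e \<in> T}. \<rho> ^ card T) = (1 + \<rho>) ^ Suc (card B) - (1 + \<rho>) ^ card B"
    using assms by (simp add: sum_diff sum_power_card_Pow Pow_mono subset_insertI)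
  then show ?thesis by (simp add: algebra_simps)
qed

lemma abs_prod_spin: "\<bar>\<Prod>f\<in>S. spin (s f)\<bar> = 1"
  unfolding abs_prod by (rule prod.neutral) (simp add: spin_def)

lemma finite_even_subgraphs: "finite G \<Longrightarrow> finite (even_subgraphs ep V G)"
  unfolding even_subgraphs_def by simp

lemma even_subgraph_sum_insert:
  assumes "finite E" "e \<notin> E"
  shows "even_subgraph_sum \<theta> ep V (insert e E) s = even_subgraph_sum \<theta> ep V E s +
    (\<Sum>S\<in>{S\<in>even_subgraphs ep V (insert e E). e \<in> S}. \<theta> ^ card S * (\<Prod>f\<in>S. spin (s f)))"
proof -
  define P1 where "P1 = {S\<in>even_subgraphs ep V (insert e E). e \<in> S}"
  have "even_subgraphs ep V (insert e E) = even_subgraphs ep V E \<union> P1"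
    unfolding P1_def even_subgraphs_def by blast
  moreover have "even_subgraphs ep V E \<inter> P1 = {}"
    using assms(2) unfolding P1_def even_subgraphs_def by blast
  moreover have "finite P1" using assms(1) unfolding P1_def by (simp add: finite_even_subgraphs)
  ultimately show ?thesis
    unfolding even_subgraph_sum_def P1_def[symmetric] using assms(1)
    by (simp add: sum.union_disjoint finite_even_subgraphs)
qed

section \<open>Even subgraphs when the non-tree edges are far apart\<close>

locale separated_nontree_edges =
  fixes ep :: "'e \<Rightarrow> 'v \<times> 'v" and V :: "'v set" and EE F :: "'e set" and \<Delta> :: nat
  assumes finite_edges: "finite EE"
    and ends_in_V: "\<forall>f\<in>EE. fst (ep f) \<in> V \<and> snd (ep f) \<in> V"
    and acyclic: "acyclic_edges ep F"
    and nonloop: "\<forall>f\<in>EE - F. fst (ep f) \<noteq> snd (ep f)"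
    and disjoint_ends: "\<forall>f\<in>EE - F. \<forall>g\<in>EE - F. f \<noteq> g \<longrightarrow> ends ep f \<inter> ends ep g = {}"
    and far: "\<forall>u\<in>(\<Union>f\<in>EE - F. ends ep f). \<forall>w\<in>(\<Union>f\<in>EE - F. ends ep f).
                u \<noteq> w \<longrightarrow> fdist ep F u w \<ge> enat \<Delta>"
begin

lemma even_subgraph_even_edge_degree:
  assumes "S \<in> even_subgraphs ep V EE"
  shows "even (edge_degree ep S w)"
proof (cases "w \<in> V")
  case False
  with assms ends_in_V have "edge_degree ep S w = 0"
    unfolding even_subgraphs_def by (intro edge_degree_eq_0) auto
  then show ?thesis by simp
qed (use assms in \<open>auto simp: even_subgraphs_def\<close>)

lemma edge_degree_nontree:
  assumes "T \<subseteq> EE - F"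
  shows "edge_degree ep T w = (if w \<in> (\<Union>f\<in>T. ends ep f) then 1 else 0)"
proof (cases "w \<in> (\<Union>f\<in>T. ends ep f)")
  case True
  then obtain f0 where f0: "f0 \<in> T" "w \<in> ends ep f0" by auto
  have unique: "f = f0" if "f \<in> T" "w \<in> ends ep f" for f
  proof (rule ccontr)
    assume "f \<noteq> f0"
    moreover have "f \<in> EE - F" "f0 \<in> EE - F" using assms that(1) f0(1) by auto
    ultimately have "ends ep f \<inter> ends ep f0 = {}" using disjoint_ends by blast
    then show False using that(2) f0(2) by blast
  qed
  have fst_eq: "{f\<in>T. fst (ep f) = w} = (if fst (ep f0) = w then {f0} else {})"
  proof (rule set_eqI)
    fix f show "f \<in> {f\<in>T. fst (ep f) = w} \<longleftrightarrow> f \<in> (if fst (ep f0) = w then {f0} else {})"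
      using unique[of f] f0(1) unfolding ends_def by (cases "fst (ep f0) = w") auto
  qed
  have snd_eq: "{f\<in>T. snd (ep f) = w} = (if snd (ep f0) = w then {f0} else {})"
  proof (rule set_eqI)
    fix f show "f \<in> {f\<in>T. snd (ep f) = w} \<longleftrightarrow> f \<in> (if snd (ep f0) = w then {f0} else {})"
      using unique[of f] f0(1) unfolding ends_def by (cases "snd (ep f0) = w") auto
  qed
  have "fst (ep f0) \<noteq> snd (ep f0)" using nonloop f0(1) assms by auto
  then show ?thesis using True f0(2) unfolding edge_degree_def fst_eq snd_eq ends_def by auto
next
  case False
  then have "edge_degree ep T w = 0" by (intro edge_degree_eq_0) (auto simp: ends_def)
  with False show ?thesis by simp
qed

lemma card_ends_nontree:
  assumes "T \<subseteq> EE - F"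
  shows "card (\<Union>f\<in>T. ends ep f) = 2 * card T"
proof -
  have "finite T" using assms finite_edges finite_subset by blast
  then have "card (\<Union>f\<in>T. ends ep f) = (\<Sum>f\<in>T. card (ends ep f))"
    using disjoint_ends assms by (intro card_UN_disjoint) (auto simp: ends_def)
  also have "\<dots> = (\<Sum>f\<in>T. 2)"
    using nonloop assms by (intro sum.cong) (auto simp: ends_def)
  finally show ?thesis by simp
qed

lemma card_Diff_forest_le:
  assumes S: "S \<in> even_subgraphs ep V EE"
  shows "\<Delta> * card (S - F) \<le> card S"
proof -
  define Ob where "Ob = (\<Union>f\<in>S - F. ends ep f)"
  have fin: "finite S" using S finite_edges finite_subset unfolding even_subgraphs_def by blast
  have nontree: "S - F \<subseteq> EE - F" using S unfolding even_subgraphs_def by blast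
  have "edge_degree ep S w = edge_degree ep ((S \<inter> F) \<union> (S - F)) w" for w
    by (simp add: Int_Diff_Un)
  also have "\<dots> w = edge_degree ep (S \<inter> F) w + edge_degree ep (S - F) w" for w
    using fin by (intro edge_degree_Un) auto
  finally have degree_split: "edge_degree ep S w = edge_degree ep (S \<inter> F) w + edge_degree ep (S - F) w" for w .
  have odd_eq: "{w. odd (edge_degree ep (S \<inter> F) w)} = Ob"
  proof (rule set_eqI)
    fix w
    have "even (edge_degree ep (S \<inter> F) w + edge_degree ep (S - F) w)"
      using degree_split[of w] even_subgraph_even_edge_degree[OF S, of w] by simp
    then show "w \<in> {w. odd (edge_degree ep (S \<inter> F) w)} \<longleftrightarrow> w \<in> Ob"
      unfolding Ob_def edge_degree_nontree[OF nontree] by (auto split: if_splits)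
  qed
  have "\<Delta> * card {w. odd (edge_degree ep (S \<inter> F) w)} \<le> 2 * card (S \<inter> F)"
  proof (rule card_odd_edge_degree_le)
    show "\<forall>u w. odd (edge_degree ep (S \<inter> F) u) \<longrightarrow> odd (edge_degree ep (S \<inter> F) w) \<longrightarrow> u \<noteq> w \<longrightarrow>
            enat \<Delta> \<le> fdist ep F u w"
    proof (intro allI impI)
      fix u w assume "odd (edge_degree ep (S \<inter> F) u)" "odd (edge_degree ep (S \<inter> F) w)" "u \<noteq> w"
      then have "u \<in> (\<Union>f\<in>EE - F. ends ep f)" "w \<in> (\<Union>f\<in>EE - F. ends ep f)"
        using odd_eq nontree unfolding Ob_def by auto
      then show "enat \<Delta> \<le> fdist ep F u w" using far \<open>u \<noteq> w\<close> by blast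
    qed
  qed (use fin in auto)
  then have "\<Delta> * card (S - F) \<le> card (S \<inter> F)"
    unfolding odd_eq Ob_def card_ends_nontree[OF nontree] by simp
  also have "\<dots> \<le> card S" using fin by (simp add: card_mono)
  finally show ?thesis .
qed

lemma inj_on_Diff_forest: "inj_on (\<lambda>S. S - F) (even_subgraphs ep V EE)"
proof (rule inj_onI)
  fix S1 S2 assume S: "S1 \<in> even_subgraphs ep V EE" "S2 \<in> even_subgraphs ep V EE"
    and eq: "S1 - F = S2 - F"
  have fin: "finite S1" "finite S2"
    using S finite_subset[OF _ finite_edges] unfolding even_subgraphs_def by auto
  have "\<forall>w. even (edge_degree ep S1 w)" "\<forall>w. even (edge_degree ep S2 w)"
    using S by (simp_all add: even_subgraph_even_edge_degree)
  then have "\<forall>x. even (edge_degree ep ((S1 - S2) \<union> (S2 - S1)) x)"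
    by (intro allI even_edge_degree_sym_diff[OF fin]) simp_all
  moreover have "(S1 - S2) \<union> (S2 - S1) \<subseteq> F"
  proof
    fix x assume "x \<in> (S1 - S2) \<union> (S2 - S1)"
    with eq show "x \<in> F" by (metis Diff_iff Un_iff)
  qed
  moreover have "finite ((S1 - S2) \<union> (S2 - S1))" using fin by simp
  ultimately have "(S1 - S2) \<union> (S2 - S1) = {}"
    by (intro acyclic_even_edge_degree_empty[OF acyclic])
  then show "S1 = S2" by blast
qed

lemma sum_even_subgraph_weights_le:
  assumes \<theta>: "0 \<le> \<theta>" "\<theta> \<le> (1::real)"
    and P: "P \<subseteq> even_subgraphs ep V EE" and Q: "finite Q" "(\<lambda>S. S - F) ` P \<subseteq> Q"
  shows "(\<Sum>S\<in>P. \<theta> ^ card S) \<le> (\<Sum>T\<in>Q. (\<theta> ^ \<Delta>) ^ card T)"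
proof -
  have "(\<Sum>S\<in>P. \<theta> ^ card S) \<le> (\<Sum>S\<in>P. (\<theta> ^ \<Delta>) ^ card (S - F))"
  proof (rule sum_mono)
    fix S assume "S \<in> P"
    then have "\<Delta> * card (S - F) \<le> card S" using P card_Diff_forest_le by blast
    then show "\<theta> ^ card S \<le> (\<theta> ^ \<Delta>) ^ card (S - F)"
      unfolding power_mult[symmetric] using \<theta> by (rule power_decreasing)
  qed
  also have "\<dots> = (\<Sum>T\<in>(\<lambda>S. S - F) ` P. (\<theta> ^ \<Delta>) ^ card T)"
    using inj_on_subset[OF inj_on_Diff_forest P] by (simp add: sum.reindex)
  also have "\<dots> \<le> (\<Sum>T\<in>Q. (\<theta> ^ \<Delta>) ^ card T)"
    using Q \<theta> by (intro sum_mono2) auto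
  finally show ?thesis .
qed

lemma sum_abs_even_subgraph_terms_le:
  assumes "0 \<le> \<theta>" "\<theta> \<le> (1::real)" "P \<subseteq> even_subgraphs ep V EE" "finite Q" "(\<lambda>S. S - F) ` P \<subseteq> Q"
  shows "\<bar>\<Sum>S\<in>P. \<theta> ^ card S * (\<Prod>f\<in>S. spin (s f))\<bar> \<le> (\<Sum>T\<in>Q. (\<theta> ^ \<Delta>) ^ card T)"
proof -
  have "\<bar>\<Sum>S\<in>P. \<theta> ^ card S * (\<Prod>f\<in>S. spin (s f))\<bar> \<le> (\<Sum>S\<in>P. \<theta> ^ card S)"
    using sum_abs[of "\<lambda>S. \<theta> ^ card S * (\<Prod>f\<in>S. spin (s f))" P] assms(1)
    by (simp add: abs_mult abs_prod_spin)
  also have "\<dots> \<le> (\<Sum>T\<in>Q. (\<theta> ^ \<Delta>) ^ card T)"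
    using sum_even_subgraph_weights_le assms by blast
  finally show ?thesis .
qed

lemma even_subgraph_sum_ge:
  assumes G: "G \<subseteq> EE" and \<theta>: "0 \<le> \<theta>" "\<theta> \<le> 1"
  shows "2 - (1 + \<theta> ^ \<Delta>) ^ card (G - F) \<le> even_subgraph_sum \<theta> ep V G s"
proof -
  let ?P = "even_subgraphs ep V G - {{}}"
  have finG: "finite G" using G finite_edges finite_subset by blast
  have "even_subgraph_sum \<theta> ep V G s = 1 + (\<Sum>S\<in>?P. \<theta> ^ card S * (\<Prod>f\<in>S. spin (s f)))"
    unfolding even_subgraph_sum_def
    using sum.remove[OF finite_even_subgraphs[OF finG] empty_in_even_subgraphs,
        of "\<lambda>S. \<theta> ^ card S * (\<Prod>f\<in>S. spin (s f))"] by simp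
  moreover have P: "?P \<subseteq> even_subgraphs ep V EE" using even_subgraphs_mono[OF G] by blast
  have "(\<lambda>S. S - F) ` ?P \<subseteq> Pow (G - F) - {{}}"
  proof
    fix T assume "T \<in> (\<lambda>S. S - F) ` ?P"
    then obtain S where S: "S \<in> ?P" "T = S - F" by blast
    then have "S - F \<noteq> {} - F"
      using inj_onD[OF inj_on_Diff_forest _ _ empty_in_even_subgraphs] P by blast
    with S show "T \<in> Pow (G - F) - {{}}" unfolding even_subgraphs_def by auto
  qed
  then have "\<bar>\<Sum>S\<in>?P. \<theta> ^ card S * (\<Prod>f\<in>S. spin (s f))\<bar> \<le> (\<Sum>T\<in>Pow (G - F) - {{}}. (\<theta> ^ \<Delta>) ^ card T)"
    using sum_abs_even_subgraph_terms_le[OF \<theta> P] finG by simp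
  moreover have "(\<Sum>T\<in>Pow (G - F) - {{}}. (\<theta> ^ \<Delta>) ^ card T) = (1 + \<theta> ^ \<Delta>) ^ card (G - F) - 1"
    using finG by (simp add: sum_diff sum_power_card_Pow)
  ultimately show ?thesis by linarith
qed

lemma abs_sum_even_subgraphs_containing_le:
  assumes G: "G \<subseteq> EE" and e: "e \<in> G - F" and \<theta>: "0 \<le> \<theta>" "\<theta> \<le> 1"
  shows "\<bar>\<Sum>S\<in>{S\<in>even_subgraphs ep V G. e \<in> S}. \<theta> ^ card S * (\<Prod>f\<in>S. spin (s f))\<bar>
    \<le> \<theta> ^ \<Delta> * (1 + \<theta> ^ \<Delta>) ^ card (G - F - {e})"
proof -
  have finG: "finite G" using G finite_edges finite_subset by blast
  have "G - F = insert e (G - F - {e})" using e by blast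
  then have image: "(\<lambda>S. S - F) ` {S\<in>even_subgraphs ep V G. e \<in> S} \<subseteq> {T\<in>Pow (insert e (G - F - {e})). e \<in> T}"
    using e unfolding even_subgraphs_def by auto
  have "\<bar>\<Sum>S\<in>{S\<in>even_subgraphs ep V G. e \<in> S}. \<theta> ^ card S * (\<Prod>f\<in>S. spin (s f))\<bar>
      \<le> (\<Sum>T\<in>{T\<in>Pow (insert e (G - F - {e})). e \<in> T}. (\<theta> ^ \<Delta>) ^ card T)"
    by (rule sum_abs_even_subgraph_terms_le[OF \<theta> _ _ image])
      (use even_subgraphs_mono[OF G] finG in auto)
  also have "\<dots> = \<theta> ^ \<Delta> * (1 + \<theta> ^ \<Delta>) ^ card (G - F - {e})"
    by (rule sum_power_card_Pow_containing) (use finG in auto)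
  finally show ?thesis .
qed

end

section \<open>The law of the edge observations\<close>

definition bernoulli_weight :: "real \<Rightarrow> bool \<Rightarrow> real" where
  "bernoulli_weight eps c = (if c then eps else 1 - eps)"

definition forced_noise :: "('e \<Rightarrow> 'v \<times> 'v) \<Rightarrow> ('e \<Rightarrow> bool) \<Rightarrow> ('v \<Rightarrow> bool) \<Rightarrow> 'e \<Rightarrow> bool" where
  "forced_noise ep s x f = ((x (fst (ep f)) \<noteq> x (snd (ep f))) \<noteq> s f)"

lemma Yv_eq_iff_forced_noise: "Yv ep (x, z) f = s f \<longleftrightarrow> z f = forced_noise ep s x f"
  unfolding Yv_def forced_noise_def by auto

lemma sum_PiE_bool_prod:
  assumes "finite I"
  shows "(\<Sum>x\<in>I \<rightarrow>\<^sub>E (UNIV::bool set). \<Prod>i\<in>I. g i (x i)) = (\<Prod>i\<in>I. g i True + (g i False :: real))"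
  using prod_sum_PiE[OF assms, of "\<lambda>_. UNIV" g] by (simp add: UNIV_bool add.commute)

lemma sum_noise_agreeing:
  assumes "finite EE" "G \<subseteq> EE"
  shows "(\<Sum>z\<in>EE \<rightarrow>\<^sub>E UNIV. if \<forall>f\<in>G. z f = c f then \<Prod>f\<in>EE. bernoulli_weight eps (z f) else 0)
       = (\<Prod>f\<in>G. bernoulli_weight eps (c f))"
proof -
  define q where "q f b = (if f \<in> G \<and> b \<noteq> c f then 0 else bernoulli_weight eps b)" for f b
  have "(if \<forall>f\<in>G. z f = c f then \<Prod>f\<in>EE. bernoulli_weight eps (z f) else 0) = (\<Prod>f\<in>EE. q f (z f))" for z
    using assms by (auto simp: q_def prod_zero intro!: prod.cong)
  then have "(\<Sum>z\<in>EE \<rightarrow>\<^sub>E UNIV. if \<forall>f\<in>G. z f = c f then \<Prod>f\<in>EE. bernoulli_weight eps (z f) else 0)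
       = (\<Prod>f\<in>EE. q f True + q f False)"
    using sum_PiE_bool_prod[OF assms(1), of q] by simp
  also have "\<dots> = (\<Prod>f\<in>EE. if f \<in> G then bernoulli_weight eps (c f) else 1)"
    by (intro prod.cong) (auto simp: q_def bernoulli_weight_def)
  also have "\<dots> = (\<Prod>f\<in>G. bernoulli_weight eps (c f))"
    using assms by (simp add: prod.If_cases Int_absorb1)
  finally show ?thesis .
qed

lemma Pr_agree_marginal:
  assumes "finite V" "finite EE" "G \<subseteq> EE"
  shows "Pr eps V EE (\<lambda>\<omega>. \<forall>f\<in>G. Yv ep \<omega> f = s f) =
     (1/2) ^ card V * (\<Sum>x\<in>V \<rightarrow>\<^sub>E UNIV. \<Prod>f\<in>G. bernoulli_weight eps (forced_noise ep s x f))"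
proof -
  let ?X = "V \<rightarrow>\<^sub>E (UNIV::bool set)" and ?Z = "EE \<rightarrow>\<^sub>E (UNIV::bool set)"
  have "Pr eps V EE (\<lambda>\<omega>. \<forall>f\<in>G. Yv ep \<omega> f = s f) =
     (\<Sum>x\<in>?X. \<Sum>z\<in>?Z. if \<forall>f\<in>G. Yv ep (x, z) f = s f then weight eps V EE (x, z) else 0)"
    unfolding Pr_def sample_space_def using assms
    by (simp add: sum.inter_filter finite_PiE sum.cartesian_product)
  also have "\<dots> = (\<Sum>x\<in>?X. (1/2) ^ card V *
      (\<Sum>z\<in>?Z. if \<forall>f\<in>G. z f = forced_noise ep s x f then \<Prod>f\<in>EE. bernoulli_weight eps (z f) else 0))"
    unfolding Yv_eq_iff_forced_noise weight_def bernoulli_weight_def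
    by (simp add: sum_distrib_left if_distrib cong: if_cong)
  finally show ?thesis
    using assms by (simp add: sum_noise_agreeing sum_distrib_left)
qed

lemma bernoulli_weight_forced_noise:
  "bernoulli_weight eps (forced_noise ep s x f) =
     (1 + (1 - 2*eps) * (spin (s f) * (spin (x (fst (ep f))) * spin (x (snd (ep f)))))) / 2"
  unfolding bernoulli_weight_def forced_noise_def spin_def
  by (cases "s f"; cases "x (fst (ep f))"; cases "x (snd (ep f))") auto

lemma prod_one_plus_half:
  fixes \<theta> :: real
  assumes "finite G"
  shows "(\<Prod>f\<in>G. (1 + \<theta> * a f) / 2) = (1/2) ^ card G * (\<Sum>S\<in>Pow G. \<theta> ^ card S * (\<Prod>f\<in>S. a f))"
proof -
  have "(\<Prod>f\<in>G. (1 + \<theta> * a f) / 2) = (1/2) ^ card G * (\<Prod>f\<in>G. \<theta> * a f + 1)"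
    by (simp add: prod_dividef add.commute field_simps)
  also have "(\<Prod>f\<in>G. \<theta> * a f + 1) = (\<Sum>S\<in>Pow G. (\<Prod>f\<in>S. \<theta> * a f) * (\<Prod>f\<in>G - S. 1))"
    by (rule prod_add[OF assms])
  finally show ?thesis by (simp add: prod.distrib)
qed

lemma prod_spin_endpoints:
  assumes "finite S" "finite V" "\<forall>f\<in>S. fst (ep f) \<in> V \<and> snd (ep f) \<in> V"
  shows "(\<Prod>f\<in>S. spin (x (fst (ep f))) * spin (x (snd (ep f)))) = (\<Prod>w\<in>V. spin (x w) ^ edge_degree ep S w)"
proof -
  have group: "(\<Prod>f\<in>S. spin (x (h f))) = (\<Prod>w\<in>V. spin (x w) ^ card {f\<in>S. h f = w})"
    if "h ` S \<subseteq> V" for h :: "'a \<Rightarrow> 'b"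
  proof -
    have "(\<Prod>f\<in>S. spin (x (h f))) = (\<Prod>w\<in>V. \<Prod>f\<in>{f\<in>S. h f = w}. spin (x (h f)))"
      using prod.group[OF assms(1,2) that, of "\<lambda>f. spin (x (h f))", symmetric] by simp
    also have "\<dots> = (\<Prod>w\<in>V. spin (x w) ^ card {f\<in>S. h f = w})"
      by (intro prod.cong refl) simp
    finally show ?thesis .
  qed
  have "(\<lambda>f. fst (ep f)) ` S \<subseteq> V" "(\<lambda>f. snd (ep f)) ` S \<subseteq> V" using assms(3) by auto
  with group[of "\<lambda>f. fst (ep f)"] group[of "\<lambda>f. snd (ep f)"] show ?thesis
    unfolding edge_degree_def prod.distrib power_add by (simp add: prod.distrib)
qed

lemma sum_prod_spin_power:
  assumes "finite V"
  shows "(\<Sum>x\<in>V \<rightarrow>\<^sub>E UNIV. \<Prod>w\<in>V. spin (x w) ^ d w) = (if \<forall>w\<in>V. even (d w) then 2 ^ card V else 0)"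
proof -
  have "(\<Sum>x\<in>V \<rightarrow>\<^sub>E UNIV. \<Prod>w\<in>V. spin (x w) ^ d w) = (\<Prod>w\<in>V. spin True ^ d w + spin False ^ d w)"
    using sum_PiE_bool_prod[OF assms, of "\<lambda>w b. spin b ^ d w"] by simp
  also have "\<dots> = (\<Prod>w\<in>V. if even (d w) then 2 else 0)"
    by (intro prod.cong) (auto simp: spin_def)
  also have "\<dots> = (if \<forall>w\<in>V. even (d w) then 2 ^ card V else 0)"
    using assms by (auto simp: prod_zero)
  finally show ?thesis .
qed

lemma Pr_agree_eq:
  assumes V: "finite V" and EE: "finite EE" "G \<subseteq> EE"
    and ends: "\<forall>f\<in>G. fst (ep f) \<in> V \<and> snd (ep f) \<in> V"
  shows "Pr eps V EE (\<lambda>\<omega>. \<forall>f\<in>G. Yv ep \<omega> f = s f) = (1/2) ^ card G * even_subgraph_sum (1 - 2*eps) ep V G s"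
proof -
  let ?X = "V \<rightarrow>\<^sub>E (UNIV::bool set)" and ?\<theta> = "1 - 2*eps"
  have G: "finite G" using EE finite_subset by blast
  have "(\<Sum>x\<in>?X. \<Prod>f\<in>G. bernoulli_weight eps (forced_noise ep s x f)) =
    (\<Sum>x\<in>?X. (1/2) ^ card G * (\<Sum>S\<in>Pow G. ?\<theta> ^ card S * (\<Prod>f\<in>S. spin (s f)) *
       (\<Prod>w\<in>V. spin (x w) ^ edge_degree ep S w)))"
  proof (intro sum.cong refl)
    fix x
    have "(\<Prod>f\<in>S. spin (s f) * (spin (x (fst (ep f))) * spin (x (snd (ep f))))) =
        (\<Prod>f\<in>S. spin (s f)) * (\<Prod>w\<in>V. spin (x w) ^ edge_degree ep S w)" if "S \<in> Pow G" for S
      using that G ends V prod_spin_endpoints[of S V ep x] by (simp add: prod.distrib finite_subset subset_iff)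
    then show "(\<Prod>f\<in>G. bernoulli_weight eps (forced_noise ep s x f)) = (1/2) ^ card G * (\<Sum>S\<in>Pow G. ?\<theta> ^ card S *
        (\<Prod>f\<in>S. spin (s f)) * (\<Prod>w\<in>V. spin (x w) ^ edge_degree ep S w))"
      unfolding bernoulli_weight_forced_noise prod_one_plus_half[OF G] by (simp add: mult.assoc)
  qed
  also have "\<dots> = (1/2) ^ card G * (\<Sum>S\<in>Pow G. ?\<theta> ^ card S * (\<Prod>f\<in>S. spin (s f)) *
      (\<Sum>x\<in>?X. \<Prod>w\<in>V. spin (x w) ^ edge_degree ep S w))"
    by (simp add: sum_distrib_left sum_distrib_right sum.swap[of _ ?X])
  also have "\<dots> = (1/2) ^ card G * 2 ^ card V * even_subgraph_sum ?\<theta> ep V G s"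
    unfolding sum_prod_spin_power[OF V] even_subgraph_sum_def even_subgraphs_def using G
    by (simp add: sum.inter_filter[symmetric] sum_distrib_left mult_ac if_distrib cong: if_cong)
  finally show ?thesis
    unfolding Pr_agree_marginal[OF V EE] by (simp add: power_one_over)
qed

lemma cond_Pr_Yv_edge_eq:
  assumes V: "finite V" and E: "finite E" "e \<notin> E"
    and ends: "\<forall>f\<in>insert e E. fst (ep f) \<in> V \<and> snd (ep f) \<in> V"
    and K: "even_subgraph_sum (1 - 2*eps) ep V E y \<noteq> 0"
  shows "cond_Pr eps V (insert e E) (\<lambda>\<omega>. Yv ep \<omega> e = False) (\<lambda>\<omega>. \<forall>f\<in>E. Yv ep \<omega> f = y f) =
    1/2 + (\<Sum>S\<in>{S\<in>even_subgraphs ep V (insert e E). e \<in> S}.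
             (1 - 2*eps) ^ card S * (\<Prod>f\<in>S. spin ((y(e := False)) f)))
          / (2 * even_subgraph_sum (1 - 2*eps) ep V E y)"
proof -
  let ?\<theta> = "1 - 2*eps" and ?y = "y(e := False)"
  have same: "even_subgraph_sum ?\<theta> ep V E ?y = even_subgraph_sum ?\<theta> ep V E y"
    unfolding even_subgraph_sum_def even_subgraphs_def using E(2)
    by (intro sum.cong refl arg_cong2[where f = "(*)"] prod.cong) auto
  note split = even_subgraph_sum_insert[OF E, of ?\<theta> ep V ?y, unfolded same]
  have event: "(\<lambda>\<omega>. Yv ep \<omega> e = False \<and> (\<forall>f\<in>E. Yv ep \<omega> f = y f)) =
      (\<lambda>\<omega>. \<forall>f\<in>insert e E. Yv ep \<omega> f = ?y f)"
    using E(2) by (intro ext) auto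
  have fin: "finite (insert e E)" using E(1) by simp
  have num: "Pr eps V (insert e E) (\<lambda>\<omega>. Yv ep \<omega> e = False \<and> (\<forall>f\<in>E. Yv ep \<omega> f = y f)) =
      (1/2) ^ card (insert e E) * even_subgraph_sum ?\<theta> ep V (insert e E) ?y"
    unfolding event by (rule Pr_agree_eq[OF V fin subset_refl ends])
  have den: "Pr eps V (insert e E) (\<lambda>\<omega>. \<forall>f\<in>E. Yv ep \<omega> f = y f) =
      (1/2) ^ card E * even_subgraph_sum ?\<theta> ep V E y"
    using ends by (intro Pr_agree_eq[OF V fin]) auto
  show ?thesis
    unfolding cond_Pr_def num den split card_insert_disjoint[OF E] using K by (simp add: field_simps)
qed

lemma abs_ratio_le:
  fixes N K q \<rho> c :: real
  assumes "\<bar>N\<bar> \<le> \<rho> * q" "2 - q \<le> K" "q < 2" "0 \<le> \<rho>" "\<rho> \<le> c" "0 \<le> q"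
  shows "\<bar>N / (2 * K)\<bar> \<le> c * q / (2 - q)"
proof -
  have "\<bar>N / (2 * K)\<bar> = \<bar>N\<bar> / (2 * K)" using assms(2,3) by simp
  also have "\<dots> \<le> \<rho> * q / (2 - q)"
    using assms by (intro frac_le) auto
  also have "\<dots> \<le> c * q / (2 - q)"
    using assms by (intro divide_right_mono mult_right_mono) auto
  finally show ?thesis .
qed

theorem mainTheorem17:
  fixes V :: "'v set" and E :: "'e set" and F :: "'e set" and ep :: "'e \<Rightarrow> 'v \<times> 'v"
    and e :: 'e and a b :: 'v and eps :: real and \<Delta> :: nat and y :: "'e \<Rightarrow> bool"
  assumes eps: "0 < eps" "eps < 1/2"
    and Delta: "\<Delta> \<ge> 1"
    and finV: "finite V" and finE: "finite E"
    and ep_in: "\<forall>f \<in> insert e E. fst (ep f) \<in> V \<and> snd (ep f) \<in> V"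
    and forest: "spanning_forest ep E F"
    and e_notin: "e \<notin> E" and e_ep: "ep e = (a, b)"
    and same_tree: "fdist ep F a b < \<infinity>"
    and distinct_ends: "\<forall>f \<in> insert e E - F. fst (ep f) \<noteq> snd (ep f)"
    and disjoint_ends: "\<forall>f \<in> insert e E - F. \<forall>g \<in> insert e E - F.
                           f \<noteq> g \<longrightarrow> ends ep f \<inter> ends ep g = {}"
    and far: "\<forall>u \<in> (\<Union>f \<in> insert e E - F. ends ep f). \<forall>w \<in> (\<Union>f \<in> insert e E - F. ends ep f).
                 u \<noteq> w \<longrightarrow> fdist ep F u w \<ge> enat \<Delta>"
    and small: "(1 + (1 - 2*eps) ^ \<Delta>) ^ card (E - F) < 2"
    and pos: "Pr eps V (insert e E) (\<lambda>\<omega>. \<forall>f \<in> E. Yv ep \<omega> f = y f) > 0"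
  shows "\<bar>cond_Pr eps V (insert e E) (\<lambda>\<omega>. Yv ep \<omega> e = False)
                                     (\<lambda>\<omega>. \<forall>f \<in> E. Yv ep \<omega> f = y f) - 1/2\<bar>
         \<le> (1 - 2*eps) ^ (\<Delta> - 1) * (1 + (1 - 2*eps) ^ \<Delta>) ^ card (E - F)
             / (2 - (1 + (1 - 2*eps) ^ \<Delta>) ^ card (E - F))"
proof -
  let ?\<theta> = "1 - 2*eps"
  let ?q = "(1 + ?\<theta> ^ \<Delta>) ^ card (E - F)"
  have F: "F \<subseteq> E" "acyclic_edges ep F" using forest unfolding spanning_forest_def by auto
  interpret separated_nontree_edges ep V "insert e E" F \<Delta>
    using finE ep_in F(2) distinct_ends disjoint_ends far by unfold_locales auto
  have \<theta>: "0 \<le> ?\<theta>" "?\<theta> \<le> 1" using eps by auto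
  have K: "2 - ?q \<le> even_subgraph_sum ?\<theta> ep V E y"
    using even_subgraph_sum_ge[OF _ \<theta>] by blast
  have nontree: "insert e E - F - {e} = E - F" using F(1) e_notin by blast
  have N: "\<bar>\<Sum>S\<in>{S\<in>even_subgraphs ep V (insert e E). e \<in> S}. ?\<theta> ^ card S * (\<Prod>f\<in>S. spin ((y(e := False)) f))\<bar>
      \<le> ?\<theta> ^ \<Delta> * ?q"
    by (rule abs_sum_even_subgraphs_containing_le[where G = "insert e E" and e = e, OF _ _ \<theta>,
          unfolded nontree]) (use F(1) e_notin in auto)
  have "?\<theta> ^ \<Delta> \<le> ?\<theta> ^ (\<Delta> - 1)" using \<theta> by (intro power_decreasing) auto
  moreover have K0: "even_subgraph_sum ?\<theta> ep V E y \<noteq> 0" using K small by linarith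
  ultimately show ?thesis
    unfolding cond_Pr_Yv_edge_eq[OF finV finE e_notin ep_in K0] add_diff_cancel_left'
    by (intro abs_ratio_le[OF N K small]) (use \<theta> in auto)
qed

end
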